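(* Let $\mathcal{X}=\{\boldsymbol{x}_1,\dots,\boldsymbol{x}_N\}\subseteq\mathbb{R}^D$, $N\ge2$, with $\|\boldsymbol{x}_j\|_2=1$ for all $j$, and let $\lambda\in(1,\infty)$. Let $\mathcal{X}_0\subseteq\mathcal{X}$. If $\lambda<1/\max_{\boldsymbol{x}'\in\mathcal{X}}\max_{\boldsymbol{x}''\in\mathcal{X},\boldsymbol{x}''\neq\boldsymbol{x}'}|\langle\boldsymbol{x}',\boldsymbol{x}''\rangle|$, then $f_\lambda(\boldsymbol{x}_j,\mathcal{X}_0)=\lambda/2$ for all $\boldsymbol{x}_j\in\mathcal{X}\setminus\mathcal{X}_0$.
   Context: For $\mathcal{X}_0\subseteq\mathcal{X}$ nonempty and $\boldsymbol{x}_j\in\mathcal{X}$, define $f_\lambda(\boldsymbol{x}_j,\mathcal{X}_0):=\min_{\boldsymbol{c}\in\mathbb{R}^N}\|\boldsymbol{c}\|_1+\frac{\lambda}{2}\|\boldsymbol{x}_j-\sum_{i:\boldsymbol{x}_i\in\mathcal{X}_0}c_i\boldsymbol{x}_i\|_2^2$, and by convention $f_\lambda(\boldsymbol{x}_j,\emptyset):=\lambda/2$. If the maximum inner product is $0$, the bound is read as $+\infty$. *)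

theory Defs
  imports "HOL-Analysis.Analysis"
begin

definition f_lam :: "real \<Rightarrow> nat \<Rightarrow> (nat \<Rightarrow> 'a::euclidean_space) \<Rightarrow> 'a \<Rightarrow> 'a set \<Rightarrow> real" where
  "f_lam lam N x y X0 =
    (if X0 = {} then lam / 2
     else Inf ((\<lambda>c::nat \<Rightarrow> real. (\<Sum>i<N. \<bar>c i\<bar>) +
                 lam / 2 * (norm (y - (\<Sum>i\<in>{i. i < N \<and> x i \<in> X0}. c i *\<^sub>R x i)))\<^sup>2) ` UNIV))"

definition max_coh :: "nat \<Rightarrow> (nat \<Rightarrow> 'a::euclidean_space) \<Rightarrow> real" where
  "max_coh N x = Max {\<bar>x i \<bullet> x k\<bar> | i k. i < N \<and> k < N \<and> x i \<noteq> x k}"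

end

theory Submission
  imports Defs
begin

text \<open>If a unit vector y satisfies \<open>\<bar>y \<bullet> x\<^sub>i\<bar> \<le> \<mu>\<close> for every atom \<open>x\<^sub>i \<in> X0\<close>, expanding the
  square gives \<open>\<parallel>y - \<Sum> c\<^sub>i x\<^sub>i\<parallel>\<^sup>2 \<ge> 1 - 2 \<mu> \<parallel>c\<parallel>\<^sub>1\<close>, so the objective is at least
  \<open>\<lambda>/2 + (1 - \<lambda> \<mu>) \<parallel>c\<parallel>\<^sub>1 \<ge> \<lambda>/2\<close> once \<open>\<lambda> \<mu> \<le> 1\<close>, and c = 0 attains \<open>\<lambda>/2\<close>.
  For \<open>y = x\<^sub>j \<notin> X0\<close> every atom of X0 differs from y, so \<mu> may be taken to be the mutual
  coherence.\<close>

lemma abs_inner_sum_scaleR_le: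
  fixes y :: "'a::real_inner"
  assumes "\<And>i. i \<in> S \<Longrightarrow> \<bar>y \<bullet> u i\<bar> \<le> \<mu>"
  shows "\<bar>y \<bullet> (\<Sum>i\<in>S. c i *\<^sub>R u i)\<bar> \<le> \<mu> * (\<Sum>i\<in>S. \<bar>c i\<bar>)"
proof -
  have "\<bar>y \<bullet> (\<Sum>i\<in>S. c i *\<^sub>R u i)\<bar> = \<bar>\<Sum>i\<in>S. c i * (y \<bullet> u i)\<bar>"
    by (simp add: inner_sum_right)
  also have "\<dots> \<le> (\<Sum>i\<in>S. \<bar>c i\<bar> * \<bar>y \<bullet> u i\<bar>)"
    unfolding abs_mult[symmetric] by (rule sum_abs)
  also have "\<dots> \<le> (\<Sum>i\<in>S. \<bar>c i\<bar> * \<mu>)"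
    by (intro sum_mono mult_left_mono assms) auto
  finally show ?thesis
    by (simp add: sum_distrib_left mult.commute)
qed

lemma l1_plus_residual_ge_half:
  fixes y :: "'a::real_inner"
  assumes "norm y = 1" and "0 \<le> lam" and "lam * \<mu> \<le> 1"
    and "\<And>i. i \<in> S \<Longrightarrow> \<bar>y \<bullet> u i\<bar> \<le> \<mu>"
  shows "lam / 2 \<le> (\<Sum>i\<in>S. \<bar>c i\<bar>) + lam / 2 * (norm (y - (\<Sum>i\<in>S. c i *\<^sub>R u i)))\<^sup>2"
proof -
  define v where "v = (\<Sum>i\<in>S. c i *\<^sub>R u i)"
  define L where "L = (\<Sum>i\<in>S. \<bar>c i\<bar>)"
  have "L \<ge> 0"
    unfolding L_def by (simp add: sum_nonneg)
  have "\<bar>y \<bullet> v\<bar> \<le> \<mu> * L"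
    unfolding v_def L_def using assms(4) by (rule abs_inner_sum_scaleR_le)
  then have "y \<bullet> v \<le> \<mu> * L"
    by linarith
  moreover have "(norm (y - v))\<^sup>2 = 1 - 2 * (y \<bullet> v) + (norm v)\<^sup>2"
    using dot_norm_neg[of y v] assms(1) by simp
  ultimately have "1 - 2 * \<mu> * L \<le> (norm (y - v))\<^sup>2"
    using zero_le_power2[of "norm v"] by linarith
  then have "lam / 2 * (1 - 2 * \<mu> * L) \<le> lam / 2 * (norm (y - v))\<^sup>2"
    using assms(2) by (intro mult_left_mono) auto
  then have "L + lam / 2 - (lam * \<mu>) * L \<le> L + lam / 2 * (norm (y - v))\<^sup>2"
    by (simp add: algebra_simps)
  moreover have "(lam * \<mu>) * L \<le> L"
    using mult_right_mono[OF assms(3) \<open>L \<ge> 0\<close>] by simp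
  ultimately show ?thesis
    unfolding v_def L_def by linarith
qed

lemma f_lam_eq_half_if_incoherent:
  fixes y :: "'a::euclidean_space"
  assumes "norm y = 1" and "0 \<le> lam" and "lam * \<mu> \<le> 1"
    and "\<And>i. i < N \<Longrightarrow> x i \<in> X0 \<Longrightarrow> \<bar>y \<bullet> x i\<bar> \<le> \<mu>"
  shows "f_lam lam N x y X0 = lam / 2"
proof (cases "X0 = {}")
  case False
  define S where "S = {i. i < N \<and> x i \<in> X0}"
  define F where "F = (\<lambda>c::nat \<Rightarrow> real. (\<Sum>i<N. \<bar>c i\<bar>) +
                        lam / 2 * (norm (y - (\<Sum>i\<in>S. c i *\<^sub>R x i)))\<^sup>2)"
  have "lam / 2 \<le> F c" for c
  proof -
    have "(\<Sum>i\<in>S. \<bar>c i\<bar>) \<le> (\<Sum>i<N. \<bar>c i\<bar>)"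
      by (rule sum_mono2) (auto simp: S_def)
    moreover have "lam / 2 \<le> (\<Sum>i\<in>S. \<bar>c i\<bar>) + lam / 2 * (norm (y - (\<Sum>i\<in>S. c i *\<^sub>R x i)))\<^sup>2"
      using assms by (intro l1_plus_residual_ge_half) (auto simp: S_def)
    ultimately show ?thesis
      unfolding F_def by linarith
  qed
  moreover have "F (\<lambda>_. 0) = lam / 2"
    unfolding F_def using assms(1) by simp
  ultimately have "Inf (F ` UNIV) = lam / 2"
    by (intro cInf_eq_minimum) auto
  then show ?thesis
    using False unfolding f_lam_def F_def S_def by simp
qed (simp add: f_lam_def)

lemma abs_inner_le_max_coh:
  assumes "i < N" and "k < N" and "x i \<noteq> x k"
  shows "\<bar>x i \<bullet> x k\<bar> \<le> max_coh N x"
proof -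
  have "{\<bar>x i \<bullet> x k\<bar> | i k. i < N \<and> k < N \<and> x i \<noteq> x k}
          \<subseteq> (\<lambda>(i, k). \<bar>x i \<bullet> x k\<bar>) ` ({..<N} \<times> {..<N})"
    by auto
  then have "finite {\<bar>x i \<bullet> x k\<bar> | i k. i < N \<and> k < N \<and> x i \<noteq> x k}"
    by (rule finite_subset) auto
  then show ?thesis
    unfolding max_coh_def using assms by (intro Max_ge) blast+
qed

lemma mult_le_one_if_less_inverse:
  fixes lam \<mu> :: real
  assumes "0 < lam" and "\<mu> = 0 \<or> lam < 1 / \<mu>"
  shows "lam * \<mu> \<le> 1"
proof (cases "\<mu> > 0")
  case True
  then show ?thesis
    using assms by (auto simp: field_simps)
next
  case False
  then show ?thesis
    using assms(1) mult_left_mono[of \<mu> 0 lam] by auto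
qed

theorem theorem3:
  fixes x :: "nat \<Rightarrow> 'a::euclidean_space" and N :: nat and lam :: real and X0 :: "'a set"
  assumes "N \<ge> 2"
    and "inj_on x {..<N}"
    and "\<And>j. j < N \<Longrightarrow> norm (x j) = 1"
    and "lam > 1"
    and "X0 \<subseteq> x ` {..<N}"
    and "max_coh N x = 0 \<or> lam < 1 / max_coh N x"
  shows "\<forall>j<N. x j \<notin> X0 \<longrightarrow> f_lam lam N x (x j) X0 = lam / 2"
proof (intro allI impI)
  fix j assume "j < N" and "x j \<notin> X0"
  have "lam * max_coh N x \<le> 1"
    using assms(4,6) by (intro mult_le_one_if_less_inverse) auto
  moreover have "\<bar>x j \<bullet> x i\<bar> \<le> max_coh N x" if "i < N" and "x i \<in> X0" for i
    using \<open>j < N\<close> \<open>x j \<notin> X0\<close> that by (intro abs_inner_le_max_coh) auto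
  ultimately show "f_lam lam N x (x j) X0 = lam / 2"
    using assms(3,4) \<open>j < N\<close> by (intro f_lam_eq_half_if_incoherent) auto
qed

end
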